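(* Let $M\in\mathbb{R}^{n\times n}$ be symmetric positive definite, $N\ge1$, timestep sizes $\delta_0,\dots,\delta_N>0$ fixed, $\theta_0,\theta_{-1}\in\mathbb{R}^n$ fixed, and let $\mathcal X$ be the set of admissible control values. Suppose $\bar P(\theta_i,u)=Q(\theta_i)+b(\theta_i,u)$ where $Q:\mathbb{R}^n\to\mathbb{R}$ and, for each $u\in\mathcal X$, $b(\cdot,u)$ are twice differentiable with locally Lipschitz second derivatives and curvature bounded with a constant $L$ independent of $u$, and $\|\partial^2 b/\partial\theta_i\partial u\|$ is uniformly bounded over all $\theta_i\in\mathbb{R}^n$, $u\in\mathcal X$. With $\bar E_i=\frac{1}{2\delta_i^2}\|\theta_i-(1+\delta_i/\delta_{i-1})\theta_{i-1}+(\delta_i/\delta_{i-1})\theta_{i-2}\|_M^2+\bar P(\theta_i,u_{\iota(i)})$ for $i=1,\dots,N$, let $J_\theta(\theta,u)$ be the block matrix with $(i,k)$ block $\partial^2\bar E_i/\partial\theta_i\partial\theta_k$ ($i,k=1,\dots,N$), and let $J_u(\theta,u)$ be the block-diagonal matrix with diagonal blocks $\partial^2\bar E_i/\partial\theta_i\partial u_{\iota(i)}$. Then (i) $\sigma_{\max}(J_\theta)$ and (ii) $\sigma_{\max}(J_u)$ are upper bounded uniformly over all $\theta=(\theta_1,\dots,\theta_N)$ and all controls in $\mathcal X$.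
   Context: $\|x\|_M^2=x^TMx$; $\sigma_{\max}$ is the largest singular value. A function is $L$-curvature bounded if $\phi+\frac L2\|\cdot\|^2$ is convex and $\nabla\phi$ is $L$-Lipschitz. The map $\iota$ assigns to each frame index the index of the control used at that frame. *)

theory Defs
  imports "HOL-Analysis.Analysis"
begin

definition grad :: "(real^'n \<Rightarrow> real) \<Rightarrow> real^'n \<Rightarrow> real^'n" where
  "grad f x = (THE G. GDERIV f x :> G)"

definition jac :: "(real^'a \<Rightarrow> real^'b) \<Rightarrow> real^'a \<Rightarrow> real^'a^'b" where
  "jac g x = (THE A. (g has_derivative (\<lambda>h. A *v h)) (at x))"

definition hess :: "(real^'n \<Rightarrow> real) \<Rightarrow> real^'n \<Rightarrow> real^'n^'n" where
  "hess f x = jac (grad f) x"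

definition twice_diff_loclip :: "(real^'n \<Rightarrow> real) \<Rightarrow> bool" where
  "twice_diff_loclip \<phi> \<longleftrightarrow>
     (\<forall>x. \<phi> differentiable (at x)) \<and>
     (\<forall>x. grad \<phi> differentiable (at x)) \<and>
     (\<forall>x. \<exists>r>0. \<exists>K. K-lipschitz_on (ball x r) (hess \<phi>))"

definition curv_bounded :: "real \<Rightarrow> (real^'n \<Rightarrow> real) \<Rightarrow> bool" where
  "curv_bounded L \<phi> \<longleftrightarrow>
     convex_on UNIV (\<lambda>x. \<phi> x + L / 2 * (norm x)^2) \<and> L-lipschitz_on UNIV (grad \<phi>)"

definition pgrad :: "((int \<Rightarrow> real^'n) \<Rightarrow> real) \<Rightarrow> int \<Rightarrow> (int \<Rightarrow> real^'n) \<Rightarrow> real^'n" where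
  "pgrad f i \<theta> = grad (\<lambda>x. f (\<theta>(i := x))) (\<theta> i)"

definition blk_apply :: "('i \<Rightarrow> 'i \<Rightarrow> real^'a^'b) \<Rightarrow> 'i set \<Rightarrow> ('i \<Rightarrow> real^'a) \<Rightarrow> 'i \<Rightarrow> real^'b" where
  "blk_apply B I v i = (\<Sum>k\<in>I. B i k *v v k)"

definition blk_tapply :: "('i \<Rightarrow> 'i \<Rightarrow> real^'a^'b) \<Rightarrow> 'i set \<Rightarrow> ('i \<Rightarrow> real^'b) \<Rightarrow> 'i \<Rightarrow> real^'a" where
  "blk_tapply B I w k = (\<Sum>i\<in>I. transpose (B i k) *v w i)"

definition sigma_max :: "('i \<Rightarrow> 'i \<Rightarrow> real^'a^'b) \<Rightarrow> 'i set \<Rightarrow> real" where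
  "sigma_max B I = sqrt (Max {ev. \<exists>v. (\<exists>k\<in>I. v k \<noteq> 0) \<and>
       (\<forall>k\<in>I. blk_tapply B I (blk_apply B I v) k = ev *\<^sub>R v k)})"

definition Mnorm2 :: "real^'n^'n \<Rightarrow> real^'n \<Rightarrow> real" where
  "Mnorm2 M x = x \<bullet> (M *v x)"

text \<open>E-bar_i for frame i; \<theta> frames indexed by int (\<theta> 0, \<theta> (-1) given),
  controls u indexed by nat, \<iota> maps frames to control indices.\<close>
definition Ebar :: "real^'n^'n \<Rightarrow> (int \<Rightarrow> real) \<Rightarrow> (real^'n \<Rightarrow> real) \<Rightarrow> (real^'n \<Rightarrow> real^'m \<Rightarrow> real)
    \<Rightarrow> (int \<Rightarrow> nat) \<Rightarrow> int \<Rightarrow> (int \<Rightarrow> real^'n) \<Rightarrow> (nat \<Rightarrow> real^'m) \<Rightarrow> real" where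
  "Ebar M \<delta> Q b \<iota> i \<theta> u =
     1 / (2 * (\<delta> i)^2) *
       Mnorm2 M (\<theta> i - (1 + \<delta> i / \<delta> (i - 1)) *\<^sub>R \<theta> (i - 1) + (\<delta> i / \<delta> (i - 1)) *\<^sub>R \<theta> (i - 2))
     + (Q (\<theta> i) + b (\<theta> i) (u (\<iota> i)))"

definition J_theta where
  "J_theta M \<delta> Q b \<iota> \<theta> u i k =
     jac (\<lambda>y. pgrad (\<lambda>\<theta>'. Ebar M \<delta> Q b \<iota> i \<theta>' u) i (\<theta>(k := y))) (\<theta> k)"

definition J_u where
  "J_u M \<delta> Q b \<iota> \<theta> u i k =
     (if i = k then jac (\<lambda>w. pgrad (\<lambda>\<theta>'. Ebar M \<delta> Q b \<iota> i \<theta>' (u(\<iota> i := w))) i \<theta>) (u (\<iota> i))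
      else 0)"

end

theory Submission
  imports Defs
begin

text \<open>A block matrix over a finite index set \<open>I\<close> whose blocks all have operator norm at most
  \<open>\<beta>\<close> has \<open>\<sigma>\<^sub>m\<^sub>a\<^sub>x \<le> |I| \<beta>\<close>: test \<open>J\<^sup>T J v = \<mu> v\<close> against \<open>v\<close> and apply Cauchy-Schwarz.
  Block \<open>(i,k)\<close> of \<open>J\<^sub>\<theta>\<close> is \<open>M/\<delta>\<^sub>i\<^sup>2\<close> times the coefficient of \<open>\<theta>\<^sub>k\<close> in the second difference at
  frame \<open>i\<close>, plus, for \<open>k = i\<close>, the Hessians of \<open>Q\<close> and \<open>b(\<cdot>, u)\<close>, which have norm at most \<open>L\<close>
  because their gradients are \<open>L\<close>-Lipschitz. The only nonzero blocks of \<open>J\<^sub>u\<close> are the mixed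
  derivatives of \<open>b\<close>, bounded by hypothesis. None of these bounds involves \<open>\<theta>\<close> or the controls.\<close>

lemma grad_eqI:
  fixes f :: "real^'n \<Rightarrow> real"
  assumes "GDERIV f x :> G"
  shows "grad f x = G"
  unfolding grad_def
proof (rule the_equality)
  fix G' assume "GDERIV f x :> G'"
  with assms have "(\<lambda>h. h \<bullet> G') = (\<lambda>h. h \<bullet> G)"
    unfolding gderiv_def by (rule has_derivative_unique[rotated])
  then have "(G' - G) \<bullet> (G' - G) = 0"
    by (metis inner_diff_right right_minus_eq)
  then show "G' = G" by simp
qed (rule assms)

lemma has_gderiv_grad:
  fixes f :: "real^'n \<Rightarrow> real"
  assumes "f differentiable (at x)"
  shows "GDERIV f x :> grad f x"
proof -
  obtain D where D: "(f has_derivative D) (at x)"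
    using assms unfolding differentiable_def by blast
  then have "D = (\<lambda>h. h \<bullet> adjoint D 1)"
    using adjoint_works[OF has_derivative_linear[OF D], of _ 1] by (auto simp: fun_eq_iff)
  with D have "GDERIV f x :> adjoint D 1"
    unfolding gderiv_def by simp
  then show ?thesis
    by (simp add: grad_eqI)
qed

lemma grad_nondifferentiable:
  fixes f :: "real^'n \<Rightarrow> real"
  assumes "\<nexists>G. GDERIV f x :> G"
  shows "grad f x = (THE G. False)"
  using assms unfolding grad_def by metis

lemma jac_eqI:
  fixes g :: "real^'a \<Rightarrow> real^'b"
  assumes "(g has_derivative D) (at x)"
  shows "jac g x = matrix D"
  unfolding jac_def
proof (rule the_equality)
  show "(g has_derivative (\<lambda>h. matrix D *v h)) (at x)"
    using assms has_derivative_linear by fastforce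
next
  fix A assume "(g has_derivative (\<lambda>h. A *v h)) (at x)"
  with assms have "(\<lambda>h. A *v h) = D"
    by (rule has_derivative_unique[rotated])
  then show "A = matrix D"
    by (metis matrix_of_matrix_vector_mul)
qed

lemma jac_mult_vector:
  fixes g :: "real^'a \<Rightarrow> real^'b"
  assumes "(g has_derivative D) (at x)"
  shows "jac g x *v h = D h"
  using jac_eqI[OF assms] has_derivative_linear[OF assms] by simp

lemma jac_nondifferentiable:
  fixes g :: "real^'a \<Rightarrow> real^'b"
  assumes "\<not> g differentiable (at x)"
  shows "jac g x = (THE A. False)"
  using assms unfolding jac_def differentiable_def by metis

lemma norm_matrix_vector_mult_le:
  fixes A :: "real^'a^'b"
  shows "norm (A *v x) \<le> norm A * norm x"
proof -
  have "norm (A *v x) = L2_set (\<lambda>i. \<bar>A $ i \<bullet> x\<bar>) UNIV"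
    by (simp add: norm_vec_def matrix_vector_mult_def inner_vec_def mult.commute)
  also have "\<dots> \<le> L2_set (\<lambda>i. norm (A $ i) * norm x) UNIV"
    by (rule L2_set_mono) (auto simp: Cauchy_Schwarz_ineq2)
  also have "\<dots> = L2_set (\<lambda>i. norm (A $ i)) UNIV * norm x"
    by (simp add: L2_set_right_distrib mult.commute)
  also have "\<dots> = norm A * norm x"
    unfolding norm_vec_def[of A] ..
  finally show ?thesis .
qed

lemma has_derivative_norm_le_lipschitz:
  fixes f :: "'a::real_normed_vector \<Rightarrow> 'b::real_normed_vector"
  assumes D: "(f has_derivative D) (at x)" and lip: "L-lipschitz_on UNIV f"
  shows "norm (D h) \<le> L * norm h"
proof (cases "h = 0")
  case True
  then show ?thesis
    using linear_0[OF has_derivative_linear[OF D]] by simp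
next
  case False
  have lin: "linear D"
    using D by (rule has_derivative_linear)
  have approx: "norm (D h) \<le> L * norm h + e * norm h" if "e > 0" for e
  proof -
    obtain d where "d > 0" and d: "\<And>y. norm (y - x) < d \<Longrightarrow>
        norm (f y - f x - D (y - x)) \<le> e * norm (y - x)"
      using D \<open>e > 0\<close> unfolding has_derivative_at_alt by blast
    define t where "t = d / (2 * norm h)"
    have "t > 0" and "norm (t *\<^sub>R h) < d"
      using \<open>d > 0\<close> False by (auto simp: t_def)
    have "t * norm (D h) = norm (D (t *\<^sub>R h))"
      using \<open>t > 0\<close> by (simp add: linear_scale[OF lin])
    also have "\<dots> \<le> norm (f (x + t *\<^sub>R h) - f x) + norm (f (x + t *\<^sub>R h) - f x - D (t *\<^sub>R h))"
      using norm_triangle_ineq4[of "f (x + t *\<^sub>R h) - f x" "f (x + t *\<^sub>R h) - f x - D (t *\<^sub>R h)"]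
      by simp
    also have "\<dots> \<le> L * norm (t *\<^sub>R h) + e * norm (t *\<^sub>R h)"
      using lipschitz_onD[OF lip, of "x + t *\<^sub>R h" x] d[of "x + t *\<^sub>R h"] \<open>norm (t *\<^sub>R h) < d\<close>
      by (intro add_mono) (auto simp: dist_norm)
    also have "\<dots> = t * (L * norm h + e * norm h)"
      using \<open>t > 0\<close> by (simp add: algebra_simps)
    finally show ?thesis
      using \<open>t > 0\<close> by simp
  qed
  show ?thesis
  proof (rule field_le_epsilon)
    fix e :: real assume "e > 0"
    then show "norm (D h) \<le> L * norm h + e"
      using approx[of "e / norm h"] False by simp
  qed
qed

lemma has_derivative_two_valued_difference:
  fixes g h :: "'a::real_normed_vector \<Rightarrow> 'b::real_normed_vector"
  assumes g: "g differentiable (at x)" and h: "(h has_derivative D) (at x)"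
    and two_valued: "\<And>w. g w - h w \<in> {0, V}" and at_x: "g x - h x = V"
  shows "(g has_derivative D) (at x)"
proof -
  have "\<forall>\<^sub>F w in at x. h w + V = g w"
  proof (cases "V = 0")
    case True
    then show ?thesis
      using two_valued by simp
  next
    case False
    have "isCont g x" and "isCont h x"
      using g h differentiable_imp_continuous_within by (auto simp: differentiable_def)
    then have "((\<lambda>w. g w - h w) \<longlongrightarrow> V) (at x)"
      using at_x isCont_diff unfolding isCont_def by fastforce
    then have "\<forall>\<^sub>F w in at x. dist (g w - h w) V < norm V"
      using False by (intro tendstoD) simp_all
    then show ?thesis
    proof (rule eventually_mono)
      fix w assume "dist (g w - h w) V < norm V"
      then have "g w - h w \<noteq> 0"
        by (auto simp: dist_norm)
      then show "h w + V = g w"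
        using two_valued[of w] by auto
    qed
  qed
  moreover have "h x + V = g x"
    using at_x by (simp add: algebra_simps)
  ultimately show ?thesis
    using has_derivative_transform_eventually[OF has_derivative_add_const[OF h, of V]] by blast
qed

lemma sum_blk_tapply_inner:
  "(\<Sum>k\<in>I. blk_tapply B I w k \<bullet> v k) = (\<Sum>i\<in>I. w i \<bullet> blk_apply B I v i)"
proof -
  have "(\<Sum>k\<in>I. blk_tapply B I w k \<bullet> v k) = (\<Sum>k\<in>I. \<Sum>i\<in>I. w i \<bullet> (B i k *v v k))"
    unfolding blk_tapply_def by (simp add: inner_sum_left dot_lmul_matrix)
  also have "\<dots> = (\<Sum>i\<in>I. w i \<bullet> blk_apply B I v i)"
    by (subst sum.swap) (simp add: blk_apply_def inner_sum_right)
  finally show ?thesis .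
qed

lemma sum_norm_blk_apply_le:
  fixes B :: "'i \<Rightarrow> 'i \<Rightarrow> real^'a^'b" and \<beta> :: real
  assumes bnd: "\<And>i k x. i \<in> I \<Longrightarrow> k \<in> I \<Longrightarrow> norm (B i k *v x) \<le> \<beta> * norm x"
    and "\<beta> \<ge> 0"
  shows "(\<Sum>i\<in>I. (norm (blk_apply B I v i))\<^sup>2) \<le> (card I * \<beta>)\<^sup>2 * (\<Sum>k\<in>I. (norm (v k))\<^sup>2)"
proof -
  have "(norm (blk_apply B I v i))\<^sup>2 \<le> card I * \<beta>\<^sup>2 * (\<Sum>k\<in>I. (norm (v k))\<^sup>2)" if "i \<in> I" for i
  proof -
    have "norm (blk_apply B I v i) \<le> (\<Sum>k\<in>I. \<beta> * norm (v k))"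
      unfolding blk_apply_def using bnd \<open>i \<in> I\<close> by (intro sum_norm_le) auto
    then have "(norm (blk_apply B I v i))\<^sup>2 \<le> (\<beta> * (\<Sum>k\<in>I. norm (v k)))\<^sup>2"
      by (simp add: power_mono sum_distrib_left)
    also have "\<dots> \<le> \<beta>\<^sup>2 * ((\<Sum>k\<in>I. (norm (v k))\<^sup>2) * card I)"
      unfolding power_mult_distrib by (intro mult_left_mono sum_squared_le_sum_of_squares) simp
    finally show ?thesis
      by (simp add: mult_ac)
  qed
  then have "(\<Sum>i\<in>I. (norm (blk_apply B I v i))\<^sup>2) \<le> (\<Sum>i\<in>I. card I * \<beta>\<^sup>2 * (\<Sum>k\<in>I. (norm (v k))\<^sup>2))"
    by (rule sum_mono)
  then show ?thesis
    by (simp add: power2_eq_square mult_ac)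
qed

lemma blk_eigenvalue_le:
  fixes B :: "'i \<Rightarrow> 'i \<Rightarrow> real^'a^'b" and \<beta> :: real
  assumes "finite I"
    and bnd: "\<And>i k x. i \<in> I \<Longrightarrow> k \<in> I \<Longrightarrow> norm (B i k *v x) \<le> \<beta> * norm x" and "\<beta> \<ge> 0"
    and nonzero: "\<exists>k\<in>I. v k \<noteq> 0"
    and eigen: "\<forall>k\<in>I. blk_tapply B I (blk_apply B I v) k = ev *\<^sub>R v k"
  shows "ev \<le> (card I * \<beta>)\<^sup>2"
proof -
  define R where "R = (\<Sum>k\<in>I. (norm (v k))\<^sup>2)"
  obtain k where "k \<in> I" and "v k \<noteq> 0"
    using nonzero by blast
  then have "R > 0"
    unfolding R_def using \<open>finite I\<close> by (intro sum_pos2[where i=k]) auto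
  have "ev * R = (\<Sum>k\<in>I. blk_tapply B I (blk_apply B I v) k \<bullet> v k)"
    using eigen by (simp add: R_def sum_distrib_left power2_norm_eq_inner)
  also have "\<dots> = (\<Sum>i\<in>I. (norm (blk_apply B I v i))\<^sup>2)"
    by (simp add: sum_blk_tapply_inner power2_norm_eq_inner)
  also have "\<dots> \<le> (card I * \<beta>)\<^sup>2 * R"
    unfolding R_def by (rule sum_norm_blk_apply_le[OF bnd \<open>\<beta> \<ge> 0\<close>])
  finally show ?thesis
    using \<open>R > 0\<close> by simp
qed

text \<open>\<open>Max\<close> of an empty or infinite set is the unspecified value \<open>Max {}\<close>, so the bound
  has to allow for it.\<close>

lemma sigma_max_le:
  fixes B :: "'i \<Rightarrow> 'i \<Rightarrow> real^'a^'b" and \<beta> :: real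
  assumes "finite I"
    and bnd: "\<And>i k x. i \<in> I \<Longrightarrow> k \<in> I \<Longrightarrow> norm (B i k *v x) \<le> \<beta> * norm x" and "\<beta> \<ge> 0"
  shows "sigma_max B I \<le> max (sqrt (Max {})) (card I * \<beta>)"
proof -
  define S where "S = {ev. \<exists>v. (\<exists>k\<in>I. v k \<noteq> 0) \<and>
       (\<forall>k\<in>I. blk_tapply B I (blk_apply B I v) k = ev *\<^sub>R v k)}"
  have "Max S \<le> max (Max {}) ((card I * \<beta>)\<^sup>2)"
  proof (cases "finite S \<and> S \<noteq> {}")
    case True
    then have "Max S \<in> S"
      by (intro Max_in) auto
    then have "Max S \<le> (card I * \<beta>)\<^sup>2"
      unfolding S_def using blk_eigenvalue_le[where B=B, OF assms] by blast
    then show ?thesis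
      by linarith
  next
    case False
    then have "Max S = Max {}"
      by (cases "S = {}") (simp_all add: Max.eq_fold')
    then show ?thesis
      by linarith
  qed
  moreover have "card I * \<beta> \<ge> 0"
    using \<open>\<beta> \<ge> 0\<close> by simp
  ultimately have "sqrt (Max S) \<le> max (sqrt (Max {})) (card I * \<beta>)"
    by (metis le_max_iff_disj real_sqrt_abs real_sqrt_le_iff abs_of_nonneg)
  then show ?thesis
    unfolding sigma_max_def S_def .
qed

definition second_difference :: "(int \<Rightarrow> real) \<Rightarrow> int \<Rightarrow> (int \<Rightarrow> real^'n) \<Rightarrow> real^'n" where
  "second_difference \<delta> i \<theta> =
     \<theta> i - (1 + \<delta> i / \<delta> (i - 1)) *\<^sub>R \<theta> (i - 1) + (\<delta> i / \<delta> (i - 1)) *\<^sub>R \<theta> (i - 2)"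

definition second_difference_weight :: "(int \<Rightarrow> real) \<Rightarrow> int \<Rightarrow> real" where
  "second_difference_weight \<delta> i = 1 + \<bar>1 + \<delta> i / \<delta> (i - 1)\<bar> + \<bar>\<delta> i / \<delta> (i - 1)\<bar>"

lemma Ebar_eq_second_difference:
  "Ebar M \<delta> Q b \<iota> i \<theta> u =
     1 / (2 * (\<delta> i)\<^sup>2) * Mnorm2 M (second_difference \<delta> i \<theta>) + (Q (\<theta> i) + b (\<theta> i) (u (\<iota> i)))"
  by (simp add: Ebar_def second_difference_def)

lemma second_difference_upd_self:
  "second_difference \<delta> i (\<theta>(i := x)) = x + (second_difference \<delta> i \<theta> - \<theta> i)"
  by (simp add: second_difference_def)

lemma has_derivative_if_ident_const:
  "((\<lambda>y. if P then y else c) has_derivative (\<lambda>h. if P then h else 0)) F"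
  by (cases P) simp_all

lemma has_derivative_second_difference_upd:
  "((\<lambda>y. second_difference \<delta> i (\<theta>(k := y))) has_derivative
     (\<lambda>h. second_difference \<delta> i ((\<lambda>_. 0)(k := h)))) (at x)"
  unfolding second_difference_def
  by (auto intro!: derivative_eq_intros has_derivative_if_ident_const)

lemma norm_second_difference_upd_le:
  "norm (second_difference \<delta> i ((\<lambda>_. 0)(k := h))) \<le> second_difference_weight \<delta> i * norm h"
proof -
  define a r where "a = 1 + \<delta> i / \<delta> (i - 1)" and "r = \<delta> i / \<delta> (i - 1)"
  define c where "c = (if k = i then 1 else if k = i - 1 then - a else if k = i - 2 then r else 0)"
  have "second_difference \<delta> i ((\<lambda>_. 0)(k := h)) = c *\<^sub>R h"
    by (auto simp: second_difference_def a_def r_def c_def algebra_simps)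
  moreover have "\<bar>c\<bar> \<le> 1 + \<bar>a\<bar> + \<bar>r\<bar>"
    by (auto simp: c_def)
  ultimately show ?thesis
    unfolding second_difference_weight_def a_def r_def by (simp add: mult_right_mono)
qed

lemma has_gderiv_Mnorm2:
  fixes M :: "real^'n^'n"
  assumes "transpose M = M"
  shows "GDERIV (\<lambda>x. c * Mnorm2 M (x + p)) x :> (2 * c) *\<^sub>R (M *v (x + p))"
proof -
  have sym: "v \<bullet> (M *v h) = h \<bullet> (M *v v)" for v h :: "real^'n"
    by (metis assms dot_lmul_matrix inner_commute transpose_matrix_vector)
  have "((\<lambda>x. M *v (x + p)) has_derivative (\<lambda>h. M *v h)) (at x)"
    by (rule bounded_linear.has_derivative[OF matrix_vector_mul_bounded_linear])
      (auto intro!: derivative_eq_intros)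
  then have "((\<lambda>x. (x + p) \<bullet> (M *v (x + p))) has_derivative
      (\<lambda>h. (x + p) \<bullet> (M *v h) + h \<bullet> (M *v (x + p)))) (at x)"
    by (auto intro!: derivative_eq_intros)
  then show ?thesis
    unfolding gderiv_def Mnorm2_def
    by (rule has_derivative_eq_rhs[OF has_derivative_mult_right]) (auto simp: sym fun_eq_iff algebra_simps)
qed

lemma pgrad_Ebar:
  fixes M :: "real^'n^'n"
  assumes "transpose M = M"
    and "GDERIV Q (\<theta> i) :> GQ" and "GDERIV (\<lambda>y. b y (u (\<iota> i))) (\<theta> i) :> Gb"
  shows "pgrad (\<lambda>\<theta>'. Ebar M \<delta> Q b \<iota> i \<theta>' u) i \<theta> =
     (1 / (\<delta> i)\<^sup>2) *\<^sub>R (M *v second_difference \<delta> i \<theta>) + (GQ + Gb)"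
  unfolding pgrad_def
proof (rule grad_eqI)
  show "GDERIV (\<lambda>x. Ebar M \<delta> Q b \<iota> i (\<theta>(i := x)) u) (\<theta> i) :>
      (1 / (\<delta> i)\<^sup>2) *\<^sub>R (M *v second_difference \<delta> i \<theta>) + (GQ + Gb)"
    using GDERIV_add[OF has_gderiv_Mnorm2[OF assms(1), where c="1 / (2 * (\<delta> i)\<^sup>2)"
        and x="\<theta> i" and p="second_difference \<delta> i \<theta> - \<theta> i"] GDERIV_add[OF assms(2,3)]]
    by (simp add: Ebar_eq_second_difference second_difference_upd_self)
qed

text \<open>The value \<open>0\<close> is the junk case: if \<open>b(\<cdot>, w)\<close> has no gradient at \<open>\<theta>\<^sub>i\<close> (possible for
  controls \<open>w \<notin> X\<close>), neither has \<open>Ebar\<close>, and both gradients are \<open>THE G. False\<close>.\<close>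

lemma pgrad_Ebar_minus_grad_b:
  fixes M :: "real^'n^'n"
  assumes "transpose M = M" and "GDERIV Q (\<theta> i) :> GQ"
  shows "pgrad (\<lambda>\<theta>'. Ebar M \<delta> Q b \<iota> i \<theta>' u) i \<theta> - grad (\<lambda>y. b y (u (\<iota> i))) (\<theta> i) \<in>
     {0, (1 / (\<delta> i)\<^sup>2) *\<^sub>R (M *v second_difference \<delta> i \<theta>) + GQ}"
proof (cases "\<exists>Gb. GDERIV (\<lambda>y. b y (u (\<iota> i))) (\<theta> i) :> Gb")
  case True
  then obtain Gb where Gb: "GDERIV (\<lambda>y. b y (u (\<iota> i))) (\<theta> i) :> Gb" ..
  show ?thesis
    using pgrad_Ebar[where \<theta>=\<theta> and i=i and b=b and u=u and \<iota>=\<iota> and \<delta>=\<delta>, OF assms Gb] grad_eqI[OF Gb] by simp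
next
  case False
  define E where "E x = Ebar M \<delta> Q b \<iota> i (\<theta>(i := x)) u" for x
  have "\<nexists>G. GDERIV E (\<theta> i) :> G"
  proof
    assume "\<exists>G. GDERIV E (\<theta> i) :> G"
    then obtain G where G: "GDERIV E (\<theta> i) :> G" ..
    have "GDERIV (\<lambda>x. E x - (1 / (2 * (\<delta> i)\<^sup>2) * Mnorm2 M (x + (second_difference \<delta> i \<theta> - \<theta> i)) + Q x))
        (\<theta> i) :> G - ((1 / (\<delta> i)\<^sup>2) *\<^sub>R (M *v second_difference \<delta> i \<theta>) + GQ)"
      using GDERIV_diff[OF G GDERIV_add[OF has_gderiv_Mnorm2[OF assms(1), where c="1 / (2 * (\<delta> i)\<^sup>2)"
          and x="\<theta> i" and p="second_difference \<delta> i \<theta> - \<theta> i"] assms(2)]]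
      by simp
    moreover have "(\<lambda>x. E x - (1 / (2 * (\<delta> i)\<^sup>2) * Mnorm2 M (x + (second_difference \<delta> i \<theta> - \<theta> i)) + Q x))
        = (\<lambda>y. b y (u (\<iota> i)))"
      by (simp add: E_def Ebar_eq_second_difference second_difference_upd_self fun_eq_iff)
    ultimately show False
      using False by auto
  qed
  then show ?thesis
    using grad_nondifferentiable[OF False] unfolding pgrad_def E_def
    by (simp add: grad_nondifferentiable)
qed

lemma has_derivative_fun_upd_compose:
  assumes "(G has_derivative D) (at (\<theta> i))"
  shows "((\<lambda>y. G ((\<theta>(k := y)) i)) has_derivative (\<lambda>h. if k = i then D h else 0)) (at (\<theta> k))"
  using assms by (cases "k = i") simp_all

lemma curv_bounded_hessian_le:
  fixes \<phi> :: "real^'n \<Rightarrow> real"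
  assumes "curv_bounded L \<phi>" and "(grad \<phi> has_derivative D) (at x)"
  shows "norm (D h) \<le> L * norm h"
  using assms has_derivative_norm_le_lipschitz unfolding curv_bounded_def by blast

lemma J_theta_mult_vector:
  fixes M :: "real^'n^'n" and Q :: "real^'n \<Rightarrow> real" and b :: "real^'n \<Rightarrow> real^'m \<Rightarrow> real"
  assumes sym: "transpose M = M"
    and Q: "\<And>x. Q differentiable (at x)" and b: "\<And>x. (\<lambda>y. b y (u (\<iota> i))) differentiable (at x)"
    and DQ: "(grad Q has_derivative DQ) (at (\<theta> i))"
    and Db: "(grad (\<lambda>y. b y (u (\<iota> i))) has_derivative Db) (at (\<theta> i))"
  shows "J_theta M \<delta> Q b \<iota> \<theta> u i k *v h =
     (1 / (\<delta> i)\<^sup>2) *\<^sub>R (M *v second_difference \<delta> i ((\<lambda>_. 0)(k := h))) + (if k = i then DQ h + Db h else 0)"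
proof -
  have pgrad_eq: "pgrad (\<lambda>\<theta>'. Ebar M \<delta> Q b \<iota> i \<theta>' u) i \<theta>' =
      (1 / (\<delta> i)\<^sup>2) *\<^sub>R (M *v second_difference \<delta> i \<theta>')
        + (grad Q (\<theta>' i) + grad (\<lambda>y. b y (u (\<iota> i))) (\<theta>' i))" for \<theta>'
    by (intro pgrad_Ebar[OF sym] has_gderiv_grad Q b)
  have "((\<lambda>y. (1 / (\<delta> i)\<^sup>2) *\<^sub>R (M *v second_difference \<delta> i (\<theta>(k := y)))) has_derivative
      (\<lambda>h. (1 / (\<delta> i)\<^sup>2) *\<^sub>R (M *v second_difference \<delta> i ((\<lambda>_. 0)(k := h))))) (at (\<theta> k))"
    by (intro has_derivative_scaleR_right bounded_linear.has_derivative[OF matrix_vector_mul_bounded_linear]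
        has_derivative_second_difference_upd)
  moreover have "((\<lambda>y. grad Q ((\<theta>(k := y)) i) + grad (\<lambda>y. b y (u (\<iota> i))) ((\<theta>(k := y)) i))
      has_derivative (\<lambda>h. if k = i then DQ h + Db h else 0)) (at (\<theta> k))"
    using has_derivative_add[OF DQ Db] by (rule has_derivative_fun_upd_compose)
  ultimately show ?thesis
    unfolding J_theta_def pgrad_eq by (intro jac_mult_vector has_derivative_add)
qed

lemma J_theta_block_le:
  fixes M :: "real^'n^'n" and Q :: "real^'n \<Rightarrow> real" and b :: "real^'n \<Rightarrow> real^'m \<Rightarrow> real"
  assumes sym: "transpose M = M"
    and Q: "twice_diff_loclip Q" "curv_bounded L Q"
    and b: "twice_diff_loclip (\<lambda>y. b y (u (\<iota> i)))" "curv_bounded L (\<lambda>y. b y (u (\<iota> i)))"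
  shows "norm (J_theta M \<delta> Q b \<iota> \<theta> u i k *v h) \<le>
     (norm M / (\<delta> i)\<^sup>2 * second_difference_weight \<delta> i + 2 * L) * norm h"
proof -
  obtain DQ Db where DQ: "(grad Q has_derivative DQ) (at (\<theta> i))"
    and Db: "(grad (\<lambda>y. b y (u (\<iota> i))) has_derivative Db) (at (\<theta> i))"
    using Q(1) b(1) unfolding twice_diff_loclip_def differentiable_def by blast
  have "L \<ge> 0"
    using Q(2) lipschitz_on_nonneg unfolding curv_bounded_def by blast
  have "norm (DQ h + Db h) \<le> 2 * L * norm h"
    using curv_bounded_hessian_le[OF Q(2) DQ, of h] curv_bounded_hessian_le[OF b(2) Db, of h]
      norm_triangle_ineq[of "DQ h" "Db h"] by linarith
  moreover have "J_theta M \<delta> Q b \<iota> \<theta> u i k *v h =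
      (1 / (\<delta> i)\<^sup>2) *\<^sub>R (M *v second_difference \<delta> i ((\<lambda>_. 0)(k := h))) + (if k = i then DQ h + Db h else 0)"
    using Q(1) b(1) unfolding twice_diff_loclip_def by (intro J_theta_mult_vector sym DQ Db) auto
  ultimately have "norm (J_theta M \<delta> Q b \<iota> \<theta> u i k *v h) \<le>
      1 / (\<delta> i)\<^sup>2 * norm (M *v second_difference \<delta> i ((\<lambda>_. 0)(k := h))) + 2 * L * norm h"
    using \<open>L \<ge> 0\<close> by (auto intro!: order_trans[OF norm_triangle_ineq] add_mono)
  also have "\<dots> \<le> 1 / (\<delta> i)\<^sup>2 * (norm M * (second_difference_weight \<delta> i * norm h)) + 2 * L * norm h"
    using \<open>L \<ge> 0\<close> by (intro add_mono mult_left_mono order_trans[OF norm_matrix_vector_mult_le]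
        norm_second_difference_upd_le) auto
  finally show ?thesis
    by (simp add: algebra_simps)
qed

text \<open>By the previous lemma the partial gradient may jump by a constant arbitrarily close to the
  control, so it need not be differentiable there; then \<open>jac\<close> is the unspecified matrix
  \<open>THE A. False\<close>, whose norm enters the bound.\<close>

lemma J_u_block_le:
  fixes M :: "real^'n^'n" and Q :: "real^'n \<Rightarrow> real" and b :: "real^'n \<Rightarrow> real^'m \<Rightarrow> real"
  assumes sym: "transpose M = M" and Q: "Q differentiable (at (\<theta> i))"
    and b: "(\<lambda>y. b y (u (\<iota> i))) differentiable (at (\<theta> i))"
    and mixed_diff: "(\<lambda>w. grad (\<lambda>y. b y w) (\<theta> i)) differentiable (at (u (\<iota> i)))"
    and mixed_bdd: "norm (jac (\<lambda>w. grad (\<lambda>y. b y w) (\<theta> i)) (u (\<iota> i))) \<le> K"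
  shows "norm (J_u M \<delta> Q b \<iota> \<theta> u i k *v h) \<le> max K (norm (THE A. False :: real^'m^'n)) * norm h"
proof (cases "i = k")
  case False
  then show ?thesis
    by (simp add: J_u_def le_max_iff_disj)
next
  case True
  define g where "g w = pgrad (\<lambda>\<theta>'. Ebar M \<delta> Q b \<iota> i \<theta>' (u(\<iota> i := w))) i \<theta>" for w
  define mixed where "mixed w = grad (\<lambda>y. b y w) (\<theta> i)" for w
  define V where "V = (1 / (\<delta> i)\<^sup>2) *\<^sub>R (M *v second_difference \<delta> i \<theta>) + grad Q (\<theta> i)"
  have two_valued: "g w - mixed w \<in> {0, V}" for w
    using pgrad_Ebar_minus_grad_b[where \<theta>=\<theta> and i=i and u="u(\<iota> i := w)" and \<iota>=\<iota> and b=b and \<delta>=\<delta>,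
        OF sym has_gderiv_grad[OF Q]]
    by (simp add: g_def mixed_def V_def)
  have at_control: "g (u (\<iota> i)) - mixed (u (\<iota> i)) = V"
    using pgrad_Ebar[where \<theta>=\<theta> and i=i and u=u and \<iota>=\<iota> and b=b and \<delta>=\<delta>, OF sym has_gderiv_grad[OF Q] has_gderiv_grad[OF b]]
    by (simp add: g_def mixed_def V_def)
  have "norm (jac g (u (\<iota> i))) \<le> max K (norm (THE A. False :: real^'m^'n))"
  proof (cases "g differentiable (at (u (\<iota> i)))")
    case True
    obtain D where D: "(mixed has_derivative D) (at (u (\<iota> i)))"
      using mixed_diff unfolding mixed_def differentiable_def by blast
    have "jac g (u (\<iota> i)) = jac mixed (u (\<iota> i))"
      using jac_eqI[OF D] jac_eqI[OF has_derivative_two_valued_difference[OF True D two_valued at_control]]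
      by simp
    then show ?thesis
      using mixed_bdd unfolding mixed_def by simp
  qed (simp add: jac_nondifferentiable)
  then have "norm (jac g (u (\<iota> i)) *v h) \<le> max K (norm (THE A. False :: real^'m^'n)) * norm h"
    by (intro order_trans[OF norm_matrix_vector_mult_le] mult_right_mono) simp_all
  then show ?thesis
    using True unfolding J_u_def g_def by simp
qed

lemma sigma_max_J_theta_le:
  fixes M :: "real^'n^'n" and Q :: "real^'n \<Rightarrow> real" and b :: "real^'n \<Rightarrow> real^'m \<Rightarrow> real"
  assumes sym: "transpose M = M" and "finite I"
    and Q: "twice_diff_loclip Q" "curv_bounded L Q"
    and b: "\<And>i. i \<in> I \<Longrightarrow> twice_diff_loclip (\<lambda>y. b y (u (\<iota> i))) \<and> curv_bounded L (\<lambda>y. b y (u (\<iota> i)))"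
  shows "sigma_max (J_theta M \<delta> Q b \<iota> \<theta> u) I \<le>
     max (sqrt (Max {})) (card I * ((\<Sum>i\<in>I. norm M / (\<delta> i)\<^sup>2 * second_difference_weight \<delta> i) + 2 * L))"
proof (rule sigma_max_le[OF \<open>finite I\<close>])
  have weight_nonneg: "norm M / (\<delta> i)\<^sup>2 * second_difference_weight \<delta> i \<ge> 0" for i
    by (simp add: second_difference_weight_def)
  moreover have "L \<ge> 0"
    using Q(2) lipschitz_on_nonneg unfolding curv_bounded_def by blast
  ultimately show "(\<Sum>i\<in>I. norm M / (\<delta> i)\<^sup>2 * second_difference_weight \<delta> i) + 2 * L \<ge> 0"
    by (simp add: sum_nonneg)
  fix i k h assume "i \<in> I"
  have "norm (J_theta M \<delta> Q b \<iota> \<theta> u i k *v h) \<le>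
      (norm M / (\<delta> i)\<^sup>2 * second_difference_weight \<delta> i + 2 * L) * norm h"
    using b[OF \<open>i \<in> I\<close>] by (intro J_theta_block_le sym Q) auto
  also have "\<dots> \<le> ((\<Sum>i\<in>I. norm M / (\<delta> i)\<^sup>2 * second_difference_weight \<delta> i) + 2 * L) * norm h"
    using \<open>finite I\<close> \<open>i \<in> I\<close> weight_nonneg by (intro mult_right_mono add_right_mono member_le_sum) auto
  finally show "norm (J_theta M \<delta> Q b \<iota> \<theta> u i k *v h) \<le> \<dots>" .
qed

lemma sigma_max_J_u_le:
  fixes M :: "real^'n^'n" and Q :: "real^'n \<Rightarrow> real" and b :: "real^'n \<Rightarrow> real^'m \<Rightarrow> real"
  assumes sym: "transpose M = M" and "finite I" and Q: "\<And>x. Q differentiable (at x)"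
    and b: "\<And>i. i \<in> I \<Longrightarrow> (\<lambda>y. b y (u (\<iota> i))) differentiable (at (\<theta> i))"
    and mixed_diff: "\<And>i. i \<in> I \<Longrightarrow> (\<lambda>w. grad (\<lambda>y. b y w) (\<theta> i)) differentiable (at (u (\<iota> i)))"
    and mixed_bdd: "\<And>i. i \<in> I \<Longrightarrow> norm (jac (\<lambda>w. grad (\<lambda>y. b y w) (\<theta> i)) (u (\<iota> i))) \<le> K"
  shows "sigma_max (J_u M \<delta> Q b \<iota> \<theta> u) I \<le> max (sqrt (Max {})) (card I * max K (norm (THE A. False :: real^'m^'n)))"
  by (rule sigma_max_le[OF \<open>finite I\<close>]) (auto intro: J_u_block_le sym Q b mixed_diff mixed_bdd
      simp: le_max_iff_disj)

theorem lemma3: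
  fixes M :: "real^'n^'n" and N :: nat and \<delta> :: "int \<Rightarrow> real"
    and \<theta>0 \<theta>m1 :: "real^'n" and X :: "(real^'m) set"
    and Q :: "real^'n \<Rightarrow> real" and b :: "real^'n \<Rightarrow> real^'m \<Rightarrow> real"
    and L :: real and \<iota> :: "int \<Rightarrow> nat"
  assumes M_sym: "transpose M = M"
    and M_pd: "\<forall>x. x \<noteq> 0 \<longrightarrow> x \<bullet> (M *v x) > 0"
    and N_ge: "N \<ge> 1"
    and \<delta>_pos: "\<forall>i\<in>{0..int N}. \<delta> i > 0"
    and Q_smooth: "twice_diff_loclip Q"
    and Q_curv: "curv_bounded L Q"
    and b_smooth: "\<forall>u\<in>X. twice_diff_loclip (\<lambda>x. b x u)"
    and b_curv: "\<forall>u\<in>X. curv_bounded L (\<lambda>x. b x u)"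
    and b_mixed_diff: "\<forall>x. \<forall>u\<in>X. (\<lambda>w. grad (\<lambda>y. b y w) x) differentiable (at u)"
    and b_mixed_bdd: "\<exists>K. \<forall>x. \<forall>u\<in>X. norm (jac (\<lambda>w. grad (\<lambda>y. b y w) x) u) \<le> K"
  shows "\<exists>C. \<forall>\<theta> u. \<theta> 0 = \<theta>0 \<longrightarrow> \<theta> (-1) = \<theta>m1 \<longrightarrow> (\<forall>i\<in>{1..int N}. u (\<iota> i) \<in> X) \<longrightarrow>
           sigma_max (J_theta M \<delta> Q b \<iota> \<theta> u) {1..int N} \<le> C \<and>
           sigma_max (J_u M \<delta> Q b \<iota> \<theta> u) {1..int N} \<le> C"
proof -
  obtain K where K: "\<forall>x. \<forall>u\<in>X. norm (jac (\<lambda>w. grad (\<lambda>y. b y w) x) u) \<le> K"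
    using b_mixed_bdd by blast
  define I where "I = {1..int N}"
  define C\<^sub>\<theta> where "C\<^sub>\<theta> =
    max (sqrt (Max {})) (card I * ((\<Sum>i\<in>I. norm M / (\<delta> i)\<^sup>2 * second_difference_weight \<delta> i) + 2 * L))"
  define C\<^sub>u where "C\<^sub>u = max (sqrt (Max {})) (card I * max K (norm (THE A. False :: real^'m^'n)))"
  show ?thesis
  proof (intro exI[of _ "max C\<^sub>\<theta> C\<^sub>u"] allI impI)
    fix \<theta> :: "int \<Rightarrow> real^'n" and u :: "nat \<Rightarrow> real^'m"
    assume "\<forall>i\<in>{1..int N}. u (\<iota> i) \<in> X"
    then have uX: "u (\<iota> i) \<in> X" if "i \<in> I" for i
      using that unfolding I_def by blast
    have "sigma_max (J_theta M \<delta> Q b \<iota> \<theta> u) I \<le> C\<^sub>\<theta>"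
      unfolding C\<^sub>\<theta>_def
      by (rule sigma_max_J_theta_le[OF M_sym _ Q_smooth Q_curv]) (use b_smooth b_curv uX in \<open>auto simp: I_def\<close>)
    moreover have "sigma_max (J_u M \<delta> Q b \<iota> \<theta> u) I \<le> C\<^sub>u"
      unfolding C\<^sub>u_def
      by (rule sigma_max_J_u_le[OF M_sym]) (use Q_smooth b_smooth b_mixed_diff K uX in
        \<open>auto simp: I_def twice_diff_loclip_def\<close>)
    ultimately show "sigma_max (J_theta M \<delta> Q b \<iota> \<theta> u) {1..int N} \<le> max C\<^sub>\<theta> C\<^sub>u \<and>
        sigma_max (J_u M \<delta> Q b \<iota> \<theta> u) {1..int N} \<le> max C\<^sub>\<theta> C\<^sub>u"
      unfolding I_def by linarith
  qed
qed

end
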